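(* Let $(M,\mathcal R)$ be a strongly $\lambda$-homogeneous logical structure satisfying (P). For tuples $a,b$ of the same length and a set $A$ such that $tp(a/A)$ and $tp(b/A)$ are large, the following are equivalent: (1) there are $n<\omega$ and $a=a_0,a_1,\dots,a_n=b$ such that for each $i<n$ there is an infinite $A$-indiscernible sequence containing $a_i$ and $a_{i+1}$; (2) $lstp(a/A)=lstp(b/A)$.
   Context: A logical structure is a pair $(M,\mathcal R)$ where $M$ is a first-order structure and $\mathcal R$ is a collection of finitary relations on $M$ invariant under automorphisms of $M$, closed under finite unions and intersections and under permuting coordinates; automorphisms of $(M,\mathcal R)$ preserve every member of $\mathcal R$. For sequences $\bar a,\bar b$, $tp(\bar a/\bar b)$ is the set of all expressions $R(v_{i_1},\dots,v_{i_m},b_{j_1},\dots,b_{j_l})$, $R\in\mathcal R$, with $R(a_{i_1},\dots,a_{i_m},b_{j_1},\dots,b_{j_l})$ true. $(M,\mathcal R)$ ($M$ infinite, $\lambda\le|M|$ infinite) is strongly $\lambda$-homogeneous if for $\alpha<\lambda$, $\bar a,\bar b\in M^\alpha$ with $tp(\bar a)=tp(\bar b)$ some automorphism maps $\bar a$ to $\bar b$. A type is large if it has $\ge\lambda$ realizations in $M$. $\{\bar a_i:i\in X\}$ ($X$ linearly ordered) is indiscernible over $A$ if increasing $n$-tuples all have the same type over $A$. Condition (P): there are infinite cardinals $\pi\le\pi'\le\lambda$ such that for every type $p$ over $A$ in $<\pi$ variables, $|A|<\pi$, any sequence $X$ of realizations of $p$ of length $\ge\pi'$ yields an $A$-indiscernible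 $\{\bar b_i:i<\omega\}$ each of whose $tp(\bar b_0,\dots,\bar b_n/A)$ is realized by an increasing subsequence of $X$. "Set" means subset of $M$ of cardinality $<\pi$. For a set $A$ and cardinal $\mu$, $SE^\mu(A)$ is the set of equivalence relations on $M^\mu$ invariant under automorphisms of $(M,\mathcal R)$ fixing $A$ pointwise and having fewer than $\lambda$ classes; $lstp(a/A)=lstp(b/A)$ means $E(a,b)$ for every $E\in SE^{\ell(a)}(A)$, where $\ell(a)$ is the length of $a$. *)

theory Defs
  imports Main
begin

abbreviation card_leq :: "'a set \<Rightarrow> 'b set \<Rightarrow> bool" (infix "<=o" 50) where
  "A <=o B \<equiv> (card_of A, card_of B) \<in> ordLeq"

abbreviation card_less :: "'a set \<Rightarrow> 'b set \<Rightarrow> bool" (infix "<o" 50) where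
  "A <o B \<equiv> (card_of A, card_of B) \<in> ordLess"

text \<open>The universe M is the type 'm. A finitary relation on M is a set of lists
of a fixed length (its arity). A first-order structure is given relationally by its
signature Sig (a set of finitary relations; functions and constants by their graphs).
The family Rs plays the role of the collection of relations of the logical structure.\<close>

definition finrel :: "'m list set \<Rightarrow> bool" where
  "finrel R \<longleftrightarrow> (\<exists>n. \<forall>xs\<in>R. length xs = n)"

definition has_arity :: "nat \<Rightarrow> 'm list set \<Rightarrow> bool" where
  "has_arity n R \<longleftrightarrow> (\<forall>xs\<in>R. length xs = n)"

definition autM :: "'m list set set \<Rightarrow> ('m \<Rightarrow> 'm) \<Rightarrow> bool" where
  "autM Sig f \<longleftrightarrow> bij f \<and> (\<forall>S\<in>Sig. map f ` S = S)"

definition aut :: "'m list set set \<Rightarrow> 'm list set set \<Rightarrow> ('m \<Rightarrow> 'm) \<Rightarrow> bool" where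
  "aut Sig Rs f \<longleftrightarrow> autM Sig f \<and> (\<forall>R\<in>Rs. map f ` R = R)"

definition perm_rel :: "nat \<Rightarrow> (nat \<Rightarrow> nat) \<Rightarrow> 'm list set \<Rightarrow> 'm list set" where
  "perm_rel n \<sigma> R = (\<lambda>xs. map (\<lambda>i. xs ! \<sigma> i) [0..<n]) ` R"

definition logical_structure :: "'m list set set \<Rightarrow> 'm list set set \<Rightarrow> bool" where
  "logical_structure Sig Rs \<longleftrightarrow>
     (\<forall>S\<in>Sig. finrel S) \<and> (\<forall>R\<in>Rs. finrel R) \<and>
     (\<forall>R\<in>Rs. \<forall>f. autM Sig f \<longrightarrow> map f ` R = R) \<and>
     (\<forall>R\<in>Rs. \<forall>S\<in>Rs. \<forall>n. has_arity n R \<and> has_arity n S \<longrightarrow> R \<union> S \<in> Rs \<and> R \<inter> S \<in> Rs) \<and>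
     (\<forall>R\<in>Rs. \<forall>n \<sigma>. has_arity n R \<and> bij_betw \<sigma> {..<n} {..<n} \<longrightarrow> perm_rel n \<sigma> R \<in> Rs)"

text \<open>The type over a parameter set A of a sequence a whose coordinates are
indexed by the index set I: the set of all expressions R(x_1,...,x_k) with R in Rs,
each x_j either a variable v_i (i in I) or a parameter from A, true in M when each
v_i is interpreted as a i.\<close>
definition tp :: "'m list set set \<Rightarrow> 'i set \<Rightarrow> ('i \<Rightarrow> 'm) \<Rightarrow> 'm set
                   \<Rightarrow> ('m list set \<times> ('i + 'm) list) set" where
  "tp Rs I a A = {(R, xs). R \<in> Rs \<and> set xs \<subseteq> Inl ` I \<union> Inr ` A \<and>
                           map (case_sum a id) xs \<in> R}"

text \<open>Strong lambda-homogeneity; the cardinal lambda is |Lam|. Sequences of ordinal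
length alpha < lambda are represented (up to reindexing, which does not affect types)
by sequences indexed by subsets I of M with |I| < lambda.\<close>
definition strongly_hom :: "'m list set set \<Rightarrow> 'm list set set \<Rightarrow> 'm set \<Rightarrow> bool" where
  "strongly_hom Sig Rs Lam \<longleftrightarrow>
     (\<forall>I :: 'm set. (I) <o (Lam) \<longrightarrow>
        (\<forall>a b :: 'm \<Rightarrow> 'm. tp Rs I a {} = tp Rs I b {} \<longrightarrow>
            (\<exists>f. aut Sig Rs f \<and> (\<forall>i\<in>I. f (a i) = b i))))"

definition large :: "'m list set set \<Rightarrow> 'm set \<Rightarrow> 'i set \<Rightarrow> ('i \<Rightarrow> 'm) \<Rightarrow> 'm set \<Rightarrow> bool" where
  "large Rs Lam I a A \<longleftrightarrow> (Lam) <=o ({c :: 'i \<Rightarrow> 'm. tp Rs I c A = tp Rs I a A})"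

definition incr_seq :: "('j \<times> 'j) set \<Rightarrow> 'j set \<Rightarrow> nat \<Rightarrow> (nat \<Rightarrow> 'j) \<Rightarrow> bool" where
  "incr_seq r J n s \<longleftrightarrow> (\<forall>k<n. s k \<in> J) \<and>
      (\<forall>k. Suc k < n \<longrightarrow> (s k, s (Suc k)) \<in> r \<and> s k \<noteq> s (Suc k))"

definition indisc :: "'m list set set \<Rightarrow> 'i set \<Rightarrow> 'm set \<Rightarrow> ('j \<times> 'j) set \<Rightarrow> 'j set
                        \<Rightarrow> ('j \<Rightarrow> 'i \<Rightarrow> 'm) \<Rightarrow> bool" where
  "indisc Rs I A r J f \<longleftrightarrow>
     (\<forall>n s t. incr_seq r J n s \<longrightarrow> incr_seq r J n t \<longrightarrow>
        tp Rs ({..<n} \<times> I) (\<lambda>(k, i). f (s k) i) A = tp Rs ({..<n} \<times> I) (\<lambda>(k, i). f (t k) i) A)"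

text \<open>Cardinals pi, pi' are |Pi|, |Pi'|. A sequence X of length an ordinal
alpha >= pi' is represented by a well-order r (a well-ordered index set of
cardinality >= pi'); by restricting to an initial segment, index sets inside M suffice.\<close>
definition cond_P :: "'m list set set \<Rightarrow> 'm set \<Rightarrow> 'm set \<Rightarrow> 'm set \<Rightarrow> bool" where
  "cond_P Rs Lam Pi Pi' \<longleftrightarrow>
     infinite Pi \<and> infinite Pi' \<and> (Pi) <=o (Pi') \<and> (Pi') <=o (Lam) \<and>
     (\<forall>(I :: 'm set) (A :: 'm set) (c :: 'm \<Rightarrow> 'm).
        (I) <o (Pi) \<longrightarrow> (A) <o (Pi) \<longrightarrow>
        (\<forall>(r :: ('m \<times> 'm) set) (X :: 'm \<Rightarrow> 'm \<Rightarrow> 'm).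
           Well_order r \<longrightarrow> (Pi') <=o (Field r) \<longrightarrow>
           (\<forall>j\<in>Field r. tp Rs I (X j) A = tp Rs I c A) \<longrightarrow>
           (\<exists>b :: nat \<Rightarrow> 'm \<Rightarrow> 'm.
              indisc Rs I A {(m, n). m \<le> n} UNIV b \<and>
              (\<forall>n. \<exists>s. incr_seq r (Field r) (Suc n) s \<and>
                    tp Rs ({..<Suc n} \<times> I) (\<lambda>(k, i). X (s k) i) A
                  = tp Rs ({..<Suc n} \<times> I) (\<lambda>(k, i). b k i) A))))"

text \<open>SE^mu(A) for mu the length of tuples of type 'i \<Rightarrow> 'm.\<close>
definition SE :: "'m list set set \<Rightarrow> 'm list set set \<Rightarrow> 'm set \<Rightarrow> 'm set
                   \<Rightarrow> (('i \<Rightarrow> 'm) \<times> ('i \<Rightarrow> 'm)) set set" where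
  "SE Sig Rs Lam A = {E. equiv UNIV E \<and>
      (\<forall>f. aut Sig Rs f \<and> (\<forall>x\<in>A. f x = x) \<longrightarrow>
         (\<forall>x y. (x, y) \<in> E \<longleftrightarrow> (f \<circ> x, f \<circ> y) \<in> E)) \<and>
      (UNIV // E) <o (Lam)}"

definition lstp_eq :: "'m list set set \<Rightarrow> 'm list set set \<Rightarrow> 'm set \<Rightarrow> 'm set
                        \<Rightarrow> ('i \<Rightarrow> 'm) \<Rightarrow> ('i \<Rightarrow> 'm) \<Rightarrow> bool" where
  "lstp_eq Sig Rs Lam A a b \<longleftrightarrow> (\<forall>E\<in>SE Sig Rs Lam A. (a, b) \<in> E)"

end

theory Submission
  imports Defs
begin

text \<open>
  (1) \<open>\<Longrightarrow>\<close> (2): an infinite \<open>A\<close>-indiscernible sequence realizes an Ehrenfeucht-Mostowski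
  type over \<open>A\<close>, and strong homogeneity stretches it, by Zorn's lemma along the initial
  segments of a cardinal well-order, to a sequence of length \<open>\<lambda>\<close> realizing the same type. If
  some \<open>E \<in> SE(A)\<close> separated two members of the original sequence, then by homogeneity over
  \<open>A\<close> it would separate any two members of the long one and so have \<open>\<lambda>\<close> classes. Hence
  every link of a chain as in (1) lies in every \<open>E \<in> SE(A)\<close>.

  (2) \<open>\<Longrightarrow>\<close> (1): relate two realizations of \<open>p = tp(a/A)\<close> when they are connected by such
  a chain, and put all non-realizations of \<open>p\<close> into one extra class. This is an
  \<open>A\<close>-invariant equivalence relation. Among \<open>\<pi>'\<close> realizations of \<open>p\<close>, condition (P) yields
  two with the same type over \<open>A\<close> as two members of an indiscernible sequence, and by
  homogeneity these two lie on a common indiscernible sequence; so the relation has fewer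
  than \<open>\<lambda>\<close> classes, belongs to \<open>SE(A)\<close>, and relates \<open>a\<close> to \<open>b\<close>.
\<close>

lemma incr_seq_mono: "incr_seq r D n s \<Longrightarrow> D \<subseteq> D' \<Longrightarrow> incr_seq r D' n s"
  unfolding incr_seq_def by blast

lemma incr_seq_strict:
  assumes "trans r" "antisym r" "incr_seq r D n s" "i < j" "j < n"
  shows "(s i, s j) \<in> r \<and> s i \<noteq> s j"
  using assms(4,5)
proof (induction j)
  case 0
  then show ?case by simp
next
  case (Suc j)
  have step: "(s j, s (Suc j)) \<in> r" "s j \<noteq> s (Suc j)"
    using assms(3) Suc.prems(2) unfolding incr_seq_def by auto
  show ?case
  proof (cases "i = j")
    case False
    then have "(s i, s j) \<in> r" "s i \<noteq> s j" using Suc by auto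
    then show ?thesis
      using step assms(1,2) by (metis antisymD transD)
  qed (use step in simp)
qed

lemma incr_seq_less_iff:
  assumes "trans r" "antisym r" "incr_seq r D n s" "i < n" "j < n"
  shows "(s i, s j) \<in> r \<and> s i \<noteq> s j \<longleftrightarrow> i < j"
  using incr_seq_strict[OF assms(1-3)] assms(2,4,5)
  by (metis antisymD linorder_neqE_nat)

lemma incr_seq_comp_iff:
  assumes "trans r" "antisym r" "incr_seq r D N t" "\<forall>k<n. \<pi> k < N"
  shows "incr_seq r D n (t \<circ> \<pi>) \<longleftrightarrow> (\<forall>k. Suc k < n \<longrightarrow> \<pi> k < \<pi> (Suc k))"
proof -
  have "t (\<pi> k) \<in> D" if "k < n" for k
    using assms(3,4) that unfolding incr_seq_def by blast
  then show ?thesis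
    using incr_seq_less_iff[OF assms(1-3)] assms(4) unfolding incr_seq_def by auto
qed

lemma linear_order_on_max:
  assumes "linear_order_on Z r" "finite F" "F \<noteq> {}" "F \<subseteq> Z"
  shows "\<exists>m\<in>F. \<forall>x\<in>F. (x, m) \<in> r"
  using assms(2-4)
proof (induction F rule: finite_ne_induct)
  case (singleton x)
  then show ?case
    using assms(1) unfolding linear_order_on_def partial_order_on_def preorder_on_def refl_on_def
    by auto
next
  case (insert x F)
  then obtain m where m: "m \<in> F" "\<forall>y\<in>F. (y, m) \<in> r" by auto
  have r: "trans r" "\<And>y. y \<in> Z \<Longrightarrow> (y, y) \<in> r"
    "\<And>y z. y \<in> Z \<Longrightarrow> z \<in> Z \<Longrightarrow> y \<noteq> z \<Longrightarrow> (y, z) \<in> r \<or> (z, y) \<in> r"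
    using assms(1)
    unfolding linear_order_on_def partial_order_on_def preorder_on_def refl_on_def total_on_def
    by blast+
  have "x \<in> Z" "m \<in> Z" using insert m by auto
  then consider "(x, m) \<in> r" | "(m, x) \<in> r" using r(2,3) by blast
  then show ?case
  proof cases
    case 2
    then have "\<forall>y\<in>insert x F. (y, x) \<in> r"
      using m r \<open>x \<in> Z\<close> by (auto dest: transD)
    then show ?thesis by blast
  qed (use m in auto)
qed

lemma linear_order_on_enum:
  assumes "linear_order_on Z r" "finite F" "F \<subseteq> Z"
  shows "\<exists>t. incr_seq r F (card F) t \<and> bij_betw t {..<card F} F"
  using assms(2,3)
proof (induction "card F" arbitrary: F)
  case 0
  then show ?case by (simp add: incr_seq_def bij_betw_def)
next
  case (Suc n)
  then obtain m where m: "m \<in> F" "\<forall>x\<in>F. (x, m) \<in> r"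
    using linear_order_on_max[OF assms(1)] by (metis card.empty nat.distinct(1))
  have "card (F - {m}) = n" using Suc.hyps(2) m(1) Suc.prems by simp
  then obtain t where t: "incr_seq r (F - {m}) n t" "bij_betw t {..<n} (F - {m})"
    using Suc by (metis Diff_subset finite_Diff subset_trans)
  define t' where "t' = t(n := m)"
  have "bij_betw t' {..<Suc n} F"
  proof -
    have "bij_betw t' {..<n} (F - {m})"
      using t(2) by (rule bij_betw_cong[THEN iffD1, rotated]) (simp add: t'_def)
    moreover have "bij_betw t' {n} {m}" by (simp add: t'_def)
    ultimately have "bij_betw t' ({..<n} \<union> {n}) ((F - {m}) \<union> {m})"
      by (rule bij_betw_combine) simp
    then show ?thesis using m(1) by (simp add: lessThan_Suc insert_absorb)
  qed
  moreover have "incr_seq r F (Suc n) t'"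
    using t(1) m unfolding incr_seq_def t'_def by (auto simp: less_Suc_eq)
  ultimately show ?case using Suc.hyps(2) by metis
qed

lemma incr_seq_exists:
  assumes "linear_order_on J r" "infinite J"
  shows "\<exists>s. incr_seq r J n s"
proof -
  obtain F where F: "F \<subseteq> J" "finite F" "card F = n"
    using infinite_arbitrarily_large[OF assms(2)] by blast
  with linear_order_on_enum[OF assms(1) F(2,1)] show ?thesis
    using incr_seq_mono by blast
qed

lemma linear_order_on_nat_le: "linear_order_on UNIV {(m, n :: nat). m \<le> n}"
  unfolding linear_order_on_def partial_order_on_def preorder_on_def refl_on_def trans_def
    antisym_def total_on_def
  by auto

lemma finite_ordLess_infinite_set: "finite A \<Longrightarrow> infinite C \<Longrightarrow> A <o C"
  using finite_ordLess_infinite[OF card_of_Well_order card_of_Well_order]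
  by (simp add: Field_card_of)

lemma Times_ordLess_infinite:
  assumes "infinite C" "A <o C" "B <o C"
  shows "A \<times> B <o C"
proof -
  let ?S = "A <+> B"
  have S: "?S <o C" using card_of_Plus_ordLess_infinite assms by blast
  have "inj_on (\<lambda>(a, b). (Inl a, Inr b)) (A \<times> B)" "(\<lambda>(a, b). (Inl a, Inr b)) ` (A \<times> B) \<subseteq> ?S \<times> ?S"
    by (auto simp: inj_on_def)
  then have AB: "A \<times> B <=o ?S \<times> ?S" using card_of_ordLeq by blast
  show ?thesis
  proof (cases "finite ?S")
    case True
    then have "finite (A \<times> B)" by (simp add: finite_cartesian_product)
    then show ?thesis using assms(1) finite_ordLess_infinite_set by blast
  next
    case False
    then have "?S \<times> ?S <o C"
      using S card_of_Times_same_infinite ordIso_ordLess_trans by blast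
    then show ?thesis using AB ordLeq_ordLess_trans by blast
  qed
qed

lemma ordLeq_insert_infinite:
  assumes "infinite C" "C <=o insert x Q"
  shows "C <=o Q"
proof (rule ccontr)
  assume "\<not> C <=o Q"
  then have "Q <o C"
    using ordLess_or_ordLeq[OF card_of_Well_order card_of_Well_order] by blast
  then have "Q \<union> {x} <o C"
    by (rule card_of_Un_ordLess_infinite[OF assms(1) _ finite_ordLess_infinite_set])
      (use assms(1) in auto)
  then show False using assms(2) not_ordLess_ordLeq by auto
qed

lemma ordLeq_image_reps:
  assumes "C <=o f ` P"
  obtains X where "\<forall>j\<in>C. X j \<in> P" "inj_on (f \<circ> X) C"
proof -
  obtain \<phi> where \<phi>: "inj_on \<phi> C" "\<phi> ` C \<subseteq> f ` P"
    using assms unfolding card_of_ordLeq[symmetric] by blast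
  define X where "X j = inv_into P f (\<phi> j)" for j
  have X: "X j \<in> P" "f (X j) = \<phi> j" if "j \<in> C" for j
  proof -
    have "\<phi> j \<in> f ` P" using \<phi>(2) that by blast
    then show "X j \<in> P" "f (X j) = \<phi> j"
      unfolding X_def by (rule inv_into_into, rule f_inv_into_f)
  qed
  have "inj_on (f \<circ> X) C"
  proof (rule inj_onI)
    fix i j
    assume "i \<in> C" "j \<in> C" "(f \<circ> X) i = (f \<circ> X) j"
    then show "i = j" using X(2) inj_onD[OF \<phi>(1)] by simp
  qed
  moreover have "\<forall>j\<in>C. X j \<in> P" using X(1) by blast
  ultimately show ?thesis using that by blast
qed

section \<open>Types and automorphisms\<close>

lemma tp_cong:
  assumes "\<And>i. i \<in> I \<Longrightarrow> a i = a' i"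
  shows "tp Rs I a A = tp Rs I a' A"
proof -
  have "map (case_sum a id) xs = map (case_sum a' id) xs" if "set xs \<subseteq> Inl ` I \<union> Inr ` A" for xs
    using that assms by (induction xs) auto
  then show ?thesis unfolding tp_def by (auto simp del: map_eq_conv)
qed

lemma tp_eq_subset_index:
  assumes "tp Rs I a A = tp Rs I b A" "I' \<subseteq> I"
  shows "tp Rs I' a A = tp Rs I' b A"
proof -
  have "tp Rs I' c A = {(R, xs) \<in> tp Rs I c A. set xs \<subseteq> Inl ` I' \<union> Inr ` A}" for c
    using assms(2) unfolding tp_def by blast
  then show ?thesis using assms(1) by simp
qed

lemma tp_eq_finite_index:
  assumes "\<And>F. finite F \<Longrightarrow> F \<subseteq> I \<Longrightarrow> tp Rs F a A = tp Rs F b A"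
  shows "tp Rs I a A = tp Rs I b A"
proof -
  have "(R, xs) \<in> tp Rs I a A \<longleftrightarrow> (R, xs) \<in> tp Rs I b A" for R xs
  proof -
    define F where "F = {i \<in> I. Inl i \<in> set xs}"
    have "finite F"
      unfolding F_def by (rule finite_subset[of _ "Inl -` set xs"]) (auto intro: finite_vimageI)
    moreover have "(R, xs) \<in> tp Rs I c A \<longleftrightarrow> (R, xs) \<in> tp Rs F c A" for c
    proof -
      have "set xs \<subseteq> Inl ` I \<union> Inr ` A \<longleftrightarrow> set xs \<subseteq> Inl ` F \<union> Inr ` A"
        unfolding F_def by (auto 0 3 intro: sum.exhaust)
      then show ?thesis unfolding tp_def by simp
    qed
    ultimately show ?thesis
      using assms F_def by auto
  qed
  then show ?thesis by (simp add: set_eq_iff split_paired_All)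
qed

lemma map_case_sum_comp:
  "map (case_sum (c \<circ> h) id) xs = map (case_sum c id) (map (map_sum h id) xs)"
  by (induction xs) (auto split: sum.split)

lemma tp_comp_iff:
  "(R, xs) \<in> tp Rs K (c \<circ> h) A \<longleftrightarrow>
     set xs \<subseteq> Inl ` K \<union> Inr ` A \<and> (R, map (map_sum h id) xs) \<in> tp Rs (h ` K) c A"
  unfolding tp_def map_case_sum_comp by auto

lemma tp_image_eq_iff:
  assumes "inj_on h K"
  shows "tp Rs (h ` K) a A = tp Rs (h ` K) b A \<longleftrightarrow> tp Rs K (a \<circ> h) A = tp Rs K (b \<circ> h) A"
proof
  assume "tp Rs (h ` K) a A = tp Rs (h ` K) b A"
  then show "tp Rs K (a \<circ> h) A = tp Rs K (b \<circ> h) A"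
    by (auto simp: set_eq_iff tp_comp_iff)
next
  assume eq: "tp Rs K (a \<circ> h) A = tp Rs K (b \<circ> h) A"
  let ?g = "map (map_sum (inv_into K h) id)"
  have key: "(R, ys) \<in> tp Rs (h ` K) c A \<longleftrightarrow> (R, ?g ys) \<in> tp Rs K (c \<circ> h) A"
    if "set ys \<subseteq> Inl ` h ` K \<union> Inr ` A" for R ys c
  proof -
    have "map (map_sum h id) (?g ys) = ys" "set (?g ys) \<subseteq> Inl ` K \<union> Inr ` A"
      using that assms by (induction ys) (auto simp: f_inv_into_f inv_into_into)
    then show ?thesis by (simp add: tp_comp_iff)
  qed
  have "(R, ys) \<in> tp Rs (h ` K) a A \<longleftrightarrow> (R, ys) \<in> tp Rs (h ` K) b A" for R ys
  proof (cases "set ys \<subseteq> Inl ` h ` K \<union> Inr ` A")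
    case True
    then show ?thesis by (simp add: key eq)
  qed (simp add: tp_def)
  then show "tp Rs (h ` K) a A = tp Rs (h ` K) b A"
    by (simp add: set_eq_iff split_paired_All)
qed

lemma tp_seq_reindex:
  fixes B C :: "nat \<Rightarrow> 'm \<Rightarrow> 'm" and e :: "'i \<Rightarrow> 'm"
  assumes "inj e"
  shows "tp Rs ({..<n} \<times> range e) (\<lambda>(k, m). B k m) A = tp Rs ({..<n} \<times> range e) (\<lambda>(k, m). C k m) A \<longleftrightarrow>
    tp Rs ({..<n} \<times> UNIV) (\<lambda>(k, i). B k (e i)) A = tp Rs ({..<n} \<times> UNIV) (\<lambda>(k, i). C k (e i)) A"
proof -
  let ?h = "map_prod (id :: nat \<Rightarrow> nat) e"
  have h: "inj_on ?h ({..<n} \<times> UNIV)" "?h ` ({..<n} \<times> UNIV) = {..<n} \<times> range e"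
    using assms by (simp_all add: map_prod_inj_on map_prod_surj_on)
  have comp: "(\<lambda>(k, m). D k m) \<circ> ?h = (\<lambda>(k, i). D k (e i))" for D :: "nat \<Rightarrow> 'm \<Rightarrow> 'm"
    by auto
  show ?thesis
    unfolding h(2)[symmetric] tp_image_eq_iff[OF h(1)] comp ..
qed

lemma tp_params_to_index:
  assumes "tp Rs K a A = tp Rs K b A"
  shows "tp Rs (K <+> A) (case_sum a id) {} = tp Rs (K <+> A) (case_sum b id) {}"
proof -
  have key: "(R, xs) \<in> tp Rs (K <+> A) (case_sum c id) {} \<longleftrightarrow> (R, map projl xs) \<in> tp Rs K c A"
    if "set xs \<subseteq> Inl ` (K <+> A)" for R xs c
  proof -
    have "map (case_sum (case_sum c id) id) xs = map (case_sum c id) (map projl xs)"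
      using that by (induction xs) auto
    moreover have "set (map projl xs) \<subseteq> Inl ` K \<union> Inr ` A" using that by auto
    ultimately show ?thesis using that unfolding tp_def by (simp del: map_map)
  qed
  have "(R, xs) \<in> tp Rs (K <+> A) (case_sum a id) {} \<longleftrightarrow> (R, xs) \<in> tp Rs (K <+> A) (case_sum b id) {}"
    for R xs
  proof (cases "set xs \<subseteq> Inl ` (K <+> A)")
    case True
    then show ?thesis by (simp add: key assms)
  qed (simp add: tp_def)
  then show ?thesis by (simp add: set_eq_iff split_paired_All)
qed

lemma aut_map_mem_iff:
  assumes "aut Sig Rs g" "R \<in> Rs"
  shows "map g ys \<in> R \<longleftrightarrow> ys \<in> R"
proof -
  have "inj (map g)"
    using assms(1) by (simp add: aut_def autM_def bij_is_inj inj_mapI)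
  moreover have "map g ` R = R"
    using assms by (simp add: aut_def)
  ultimately show ?thesis
    using inj_image_mem_iff[of "map g" ys R] by simp
qed

lemma tp_aut:
  assumes "aut Sig Rs g" "\<forall>x\<in>A. g x = x"
  shows "tp Rs I (g \<circ> a) A = tp Rs I a A"
proof -
  have "(R, xs) \<in> tp Rs I (g \<circ> a) A \<longleftrightarrow> (R, xs) \<in> tp Rs I a A" for R xs
  proof (cases "R \<in> Rs \<and> set xs \<subseteq> Inl ` I \<union> Inr ` A")
    case True
    then have "map (case_sum (g \<circ> a) id) xs = map g (map (case_sum a id) xs)"
      using assms(2) by (induction xs) auto
    then show ?thesis
      using True aut_map_mem_iff[OF assms(1)] unfolding tp_def by (simp del: map_eq_conv map_map)
  qed (auto simp: tp_def)
  then show ?thesis by (simp add: set_eq_iff split_paired_All)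
qed

lemma aut_inv:
  assumes "aut Sig Rs g"
  shows "aut Sig Rs (inv g)"
proof -
  have "bij g" using assms by (simp add: aut_def autM_def)
  have inv_map: "map (inv g) ` S = S" if "map g ` S = S" for S :: "'a list set"
  proof -
    have "map (inv g) ` S = (\<lambda>xs. map (inv g \<circ> g) xs) ` S"
      by (subst (1) that[symmetric]) (simp add: image_image)
    also have "\<dots> = S"
      using \<open>bij g\<close> by (simp add: bij_is_inj)
    finally show ?thesis .
  qed
  moreover have "bij (inv g)"
    using \<open>bij g\<close> by (rule bij_imp_bij_inv)
  ultimately show ?thesis
    using assms unfolding aut_def autM_def by auto
qed

text \<open>\<open>strongly_hom\<close> only concerns types over \<open>{}\<close> of tuples indexed by subsets of \<open>M\<close>: the
  parameters from \<open>A\<close> are moved into the index set, which is then embedded into \<open>M\<close>.\<close>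

lemma strongly_hom_fixing:
  fixes a b :: "'k \<Rightarrow> 'm"
  assumes hom: "strongly_hom Sig Rs Lam" and "infinite Lam" "K <o Lam" "A <o Lam"
    and eq: "tp Rs K a A = tp Rs K b A"
  shows "\<exists>g. aut Sig Rs g \<and> (\<forall>x\<in>A. g x = x) \<and> (\<forall>k\<in>K. g (a k) = b k)"
proof -
  have KA: "K <+> A <o Lam" by (rule card_of_Plus_ordLess_infinite[OF assms(2-4)])
  moreover have "Lam <=o (UNIV :: 'm set)" by (rule card_of_mono1) simp
  ultimately have "K <+> A <=o (UNIV :: 'm set)"
    by (rule ordLess_ordLeq_trans[THEN ordLess_imp_ordLeq])
  then obtain e :: "'k + 'm \<Rightarrow> 'm" where e: "inj_on e (K <+> A)"
    unfolding card_of_ordLeq[symmetric] by blast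
  define a' where "a' = case_sum a id \<circ> inv_into (K <+> A) e"
  define b' where "b' = case_sum b id \<circ> inv_into (K <+> A) e"
  have a'e: "a' (e z) = case_sum a id z" and b'e: "b' (e z) = case_sum b id z"
    if "z \<in> K <+> A" for z
    using that e by (simp_all add: a'_def b'_def)
  have "tp Rs (K <+> A) (a' \<circ> e) {} = tp Rs (K <+> A) (case_sum a id) {}"
    by (rule tp_cong) (simp add: a'e)
  also have "\<dots> = tp Rs (K <+> A) (case_sum b id) {}"
    by (rule tp_params_to_index[OF eq])
  also have "\<dots> = tp Rs (K <+> A) (b' \<circ> e) {}"
    by (rule tp_cong) (simp add: b'e)
  finally have "tp Rs (e ` (K <+> A)) a' {} = tp Rs (e ` (K <+> A)) b' {}"
    by (simp add: tp_image_eq_iff[OF e])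
  moreover have "e ` (K <+> A) <o Lam"
    by (rule ordLeq_ordLess_trans[OF card_of_image KA])
  ultimately obtain g where g: "aut Sig Rs g" "\<forall>i\<in>e ` (K <+> A). g (a' i) = b' i"
    using hom unfolding strongly_hom_def by blast
  then have gz: "g (case_sum a id z) = case_sum b id z" if "z \<in> K <+> A" for z
    using that by (simp add: a'e[symmetric] b'e[symmetric])
  show ?thesis
  proof (intro exI[of _ g] conjI ballI)
    fix x
    assume "x \<in> A"
    then show "g x = x" using gz[of "Inr x"] by auto
  next
    fix k
    assume "k \<in> K"
    then show "g (a k) = b k" using gz[of "Inl k"] by auto
  qed (rule g(1))
qed

lemma strongly_hom_fixing_family:
  fixes u v :: "'d \<Rightarrow> 'i \<Rightarrow> 'm"
  assumes "strongly_hom Sig Rs Lam" "infinite Lam" "D <o Lam" "(UNIV :: 'i set) <o Lam" "A <o Lam"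
    and "tp Rs (D \<times> UNIV) (\<lambda>(d, i). u d i) A = tp Rs (D \<times> UNIV) (\<lambda>(d, i). v d i) A"
  shows "\<exists>g. aut Sig Rs g \<and> (\<forall>x\<in>A. g x = x) \<and> (\<forall>d\<in>D. g \<circ> u d = v d)"
proof -
  obtain g where "aut Sig Rs g" "\<forall>x\<in>A. g x = x" "\<forall>(d, i)\<in>D \<times> UNIV. g (u d i) = v d i"
    using strongly_hom_fixing[OF assms(1,2) Times_ordLess_infinite[OF assms(2-4)] assms(5,6)]
    by fastforce
  then show ?thesis by (auto simp: fun_eq_iff)
qed

section \<open>Indiscernible sequences and their Ehrenfeucht-Mostowski types\<close>

lemma indisc_aut:
  assumes "indisc Rs I A r J f" "aut Sig Rs g" "\<forall>x\<in>A. g x = x"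
  shows "indisc Rs I A r J (\<lambda>j. g \<circ> f j)"
  unfolding indisc_def
proof (intro allI impI)
  fix n s t
  assume "incr_seq r J n s" "incr_seq r J n t"
  then have "tp Rs ({..<n} \<times> I) (\<lambda>(k, i). f (s k) i) A = tp Rs ({..<n} \<times> I) (\<lambda>(k, i). f (t k) i) A"
    using assms(1) unfolding indisc_def by blast
  moreover have "(\<lambda>(k, i). (g \<circ> f (q k)) i) = g \<circ> (\<lambda>(k, i). f (q k) i)" for q :: "nat \<Rightarrow> _"
    by (auto simp: fun_eq_iff)
  ultimately show "tp Rs ({..<n} \<times> I) (\<lambda>(k, i). (g \<circ> f (s k)) i) A
      = tp Rs ({..<n} \<times> I) (\<lambda>(k, i). (g \<circ> f (t k)) i) A"
    by (simp only: tp_aut[OF assms(2,3)])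
qed

lemma indisc_tp_eq:
  assumes "indisc Rs I A r J f" "x \<in> J" "y \<in> J"
  shows "tp Rs I (f x) A = tp Rs I (f y) A"
proof -
  let ?h = "\<lambda>i. (0 :: nat, i)"
  have "incr_seq r J 1 (\<lambda>_. x)" "incr_seq r J 1 (\<lambda>_. y)"
    using assms(2,3) unfolding incr_seq_def by auto
  then have "tp Rs ({..<1::nat} \<times> I) (\<lambda>(k, i). f x i) A = tp Rs ({..<1} \<times> I) (\<lambda>(k, i). f y i) A"
    using assms(1) unfolding indisc_def by blast
  moreover have h: "{..<1::nat} \<times> I = ?h ` I" "inj_on ?h I" by (auto simp: inj_on_def)
  ultimately have "tp Rs I ((\<lambda>(k, i). f x i) \<circ> ?h) A = tp Rs I ((\<lambda>(k, i). f y i) \<circ> ?h) A"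
    unfolding h(1) tp_image_eq_iff[OF h(2)] by blast
  then show ?thesis by (simp add: comp_def)
qed

lemma indisc_comp_inj:
  fixes b :: "'j \<Rightarrow> 'm \<Rightarrow> 'm" and e :: "'i \<Rightarrow> 'm"
  assumes "inj e" "indisc Rs (range e) A r J b"
  shows "indisc Rs UNIV A r J (\<lambda>j. b j \<circ> e)"
  unfolding indisc_def
proof (intro allI impI)
  fix n and s t :: "nat \<Rightarrow> 'j"
  assume "incr_seq r J n s" "incr_seq r J n t"
  then have "tp Rs ({..<n} \<times> range e) (\<lambda>(k, i). b (s k) i) A
      = tp Rs ({..<n} \<times> range e) (\<lambda>(k, i). b (t k) i) A"
    using assms(2) unfolding indisc_def by blast
  then show "tp Rs ({..<n} \<times> UNIV) (\<lambda>(k, i). (b (s k) \<circ> e) i) A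
      = tp Rs ({..<n} \<times> UNIV) (\<lambda>(k, i). (b (t k) \<circ> e) i) A"
    unfolding tp_seq_reindex[OF assms(1)] by simp
qed

definition has_em_type ::
  "'m list set set \<Rightarrow> 'm set \<Rightarrow> (nat \<Rightarrow> ('m list set \<times> (nat \<times> 'i + 'm) list) set) \<Rightarrow>
    ('x \<times> 'x) set \<Rightarrow> 'x set \<Rightarrow> ('x \<Rightarrow> 'i \<Rightarrow> 'm) \<Rightarrow> bool" where
  "has_em_type Rs A \<Phi> r D b \<longleftrightarrow>
     (\<forall>n s. incr_seq r D n s \<longrightarrow> tp Rs ({..<n} \<times> UNIV) (\<lambda>(k, i). b (s k) i) A = \<Phi> n)"

lemma indisc_iff_has_em_type: "indisc Rs UNIV A r J f \<longleftrightarrow> (\<exists>\<Phi>. has_em_type Rs A \<Phi> r J f)"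
proof
  assume ind: "indisc Rs UNIV A r J f"
  define \<Phi> where "\<Phi> n = tp Rs ({..<n} \<times> UNIV) (\<lambda>(k, i). f ((SOME s. incr_seq r J n s) k) i) A" for n
  have "has_em_type Rs A \<Phi> r J f"
    unfolding has_em_type_def \<Phi>_def
  proof (intro allI impI)
    fix n s
    assume s: "incr_seq r J n s"
    then have "incr_seq r J n (SOME s. incr_seq r J n s)" by (rule someI[of "incr_seq r J n"])
    with s ind show "tp Rs ({..<n} \<times> UNIV) (\<lambda>(k, i). f (s k) i) A
        = tp Rs ({..<n} \<times> UNIV) (\<lambda>(k, i). f ((SOME s. incr_seq r J n s) k) i) A"
      unfolding indisc_def by blast
  qed
  then show "\<exists>\<Phi>. has_em_type Rs A \<Phi> r J f" by blast
qed (auto simp: indisc_def has_em_type_def)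

lemma has_em_type_mono: "has_em_type Rs A \<Phi> r D b \<Longrightarrow> D' \<subseteq> D \<Longrightarrow> has_em_type Rs A \<Phi> r D' b"
  unfolding has_em_type_def using incr_seq_mono by blast

lemma has_em_type_aut:
  assumes "has_em_type Rs A \<Phi> r D b" "aut Sig Rs g" "\<forall>x\<in>A. g x = x"
  shows "has_em_type Rs A \<Phi> r D (\<lambda>d. g \<circ> b d)"
  unfolding has_em_type_def
proof (intro allI impI)
  fix n s
  assume s: "incr_seq r D n s"
  have "(\<lambda>(k, i). (g \<circ> b (s k)) i) = g \<circ> (\<lambda>(k, i). b (s k) i)"
    by (auto simp: fun_eq_iff)
  then have "tp Rs ({..<n} \<times> UNIV) (\<lambda>(k, i). (g \<circ> b (s k)) i) A
      = tp Rs ({..<n} \<times> UNIV) (\<lambda>(k, i). b (s k) i) A"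
    by (simp only: tp_aut[OF assms(2,3)])
  also have "\<dots> = \<Phi> n"
    using assms(1) s unfolding has_em_type_def by blast
  finally show "tp Rs ({..<n} \<times> UNIV) (\<lambda>(k, i). (g \<circ> b (s k)) i) A = \<Phi> n" .
qed

lemma has_em_type_tp_eq:
  fixes b c :: "'x \<Rightarrow> 'i \<Rightarrow> 'm"
  assumes Ord: "linear_order_on UNIV Ord"
    and "has_em_type Rs A \<Phi> Ord D b" "has_em_type Rs A \<Phi> Ord D c"
  shows "tp Rs (D \<times> UNIV) (\<lambda>(d, i). b d i) A = tp Rs (D \<times> UNIV) (\<lambda>(d, i). c d i) A"
proof (rule tp_eq_finite_index)
  fix F :: "('x \<times> 'i) set"
  assume F: "finite F" "F \<subseteq> D \<times> UNIV"
  let ?m = "card (fst ` F)"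
  obtain t where t: "incr_seq Ord (fst ` F) ?m t" "bij_betw t {..<?m} (fst ` F)"
    using linear_order_on_enum[OF Ord] F(1) by blast
  let ?h = "map_prod t (id :: 'i \<Rightarrow> 'i)"
  have h: "inj_on ?h ({..<?m} \<times> UNIV)" "?h ` ({..<?m} \<times> UNIV) = fst ` F \<times> UNIV"
    using t(2) unfolding bij_betw_def by (simp_all add: map_prod_inj_on map_prod_surj_on)
  have comp: "(\<lambda>(d, i). e d i) \<circ> ?h = (\<lambda>(k, i). e (t k) i)" for e :: "'x \<Rightarrow> 'i \<Rightarrow> 'm"
    by auto
  have "incr_seq Ord D ?m t"
    by (rule incr_seq_mono[OF t(1)]) (use F(2) in auto)
  then have "tp Rs ({..<?m} \<times> UNIV) ((\<lambda>(d, i). b d i) \<circ> ?h) A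
      = tp Rs ({..<?m} \<times> UNIV) ((\<lambda>(d, i). c d i) \<circ> ?h) A"
    using assms(2,3) unfolding comp has_em_type_def by simp
  then have "tp Rs (fst ` F \<times> UNIV) (\<lambda>(d, i). b d i) A = tp Rs (fst ` F \<times> UNIV) (\<lambda>(d, i). c d i) A"
    unfolding h(2)[symmetric] tp_image_eq_iff[OF h(1)] .
  then show "tp Rs F (\<lambda>(d, i). b d i) A = tp Rs F (\<lambda>(d, i). c d i) A"
    by (rule tp_eq_subset_index) (auto intro: rev_image_eqI)
qed

lemma has_em_type_finite:
  assumes Ord: "linear_order_on UNIV Ord" and "finite D"
    and J: "linear_order_on J r" "infinite J" and f: "has_em_type Rs A \<Phi> r J f"
  shows "\<exists>b. has_em_type Rs A \<Phi> Ord D b"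
proof -
  let ?N = "card D"
  obtain t where t: "incr_seq Ord D ?N t" "bij_betw t {..<?N} D"
    using linear_order_on_enum[OF Ord assms(2)] by blast
  obtain s0 where s0: "incr_seq r J ?N s0" using incr_seq_exists[OF J] by blast
  define \<pi> where "\<pi> = inv_into {..<?N} t"
  have "has_em_type Rs A \<Phi> Ord D (f \<circ> s0 \<circ> \<pi>)"
    unfolding has_em_type_def
  proof (intro allI impI)
    fix n s
    assume s: "incr_seq Ord D n s"
    have \<pi>s: "\<pi> (s k) < ?N" "t (\<pi> (s k)) = s k" if "k < n" for k
    proof -
      have sk: "s k \<in> t ` {..<?N}"
        using s that t(2) by (auto simp: incr_seq_def bij_betw_def)
      show "\<pi> (s k) < ?N" "t (\<pi> (s k)) = s k"
        unfolding \<pi>_def using inv_into_into[OF sk] f_inv_into_f[OF sk] by simp_all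
    qed
    have "trans Ord" "antisym Ord" "trans r" "antisym r"
      using Ord J(1) by (simp_all add: order_on_defs)
    moreover have "incr_seq Ord D n (t \<circ> (\<pi> \<circ> s))"
      using s \<pi>s(2) unfolding incr_seq_def by simp
    ultimately have "incr_seq r J n (s0 \<circ> (\<pi> \<circ> s))"
      using incr_seq_comp_iff[OF _ _ t(1)] incr_seq_comp_iff[OF _ _ s0] \<pi>s(1) by simp
    then have "tp Rs ({..<n} \<times> UNIV) (\<lambda>(k, i). f ((s0 \<circ> (\<pi> \<circ> s)) k) i) A = \<Phi> n"
      using f unfolding has_em_type_def by blast
    then show "tp Rs ({..<n} \<times> UNIV) (\<lambda>(k, i). (f \<circ> s0 \<circ> \<pi>) (s k) i) A = \<Phi> n"
      by simp
  qed
  then show ?thesis by blast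
qed

section \<open>Stretching an indiscernible sequence to length \<open>\<lambda>\<close>\<close>

text \<open>Partial realizations of \<open>\<Phi>\<close>, to which Zorn's lemma is applied. Their domains are initial
  segments of \<open>V\<close>; when \<open>V\<close> is the cardinal order of \<open>D\<close>, a proper initial segment is smaller
  than \<open>D\<close>, so the induction hypothesis of \<open>has_em_type_stretch\<close> applies to it.\<close>

definition em_graphs ::
  "'m list set set \<Rightarrow> 'm set \<Rightarrow> (nat \<Rightarrow> ('m list set \<times> (nat \<times> 'i + 'm) list) set) \<Rightarrow>
    ('x \<times> 'x) set \<Rightarrow> ('x \<times> 'x) set \<Rightarrow> ('x \<times> ('i \<Rightarrow> 'm)) set set" where
  "em_graphs Rs A \<Phi> Ord V = {G. single_valued G \<and> ofilter V (Domain G) \<and>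
     (\<forall>n s t. incr_seq Ord (Domain G) n s \<longrightarrow> (\<forall>k<n. (s k, t k) \<in> G) \<longrightarrow>
        tp Rs ({..<n} \<times> UNIV) (\<lambda>(k, i). t k i) A = \<Phi> n)}"

lemma Domain_some_mem: "d \<in> Domain G \<Longrightarrow> (d, SOME y. (d, y) \<in> G) \<in> G"
  by (auto intro: someI[where P = "\<lambda>y. (d, y) \<in> G"])

lemma em_graphs_has_em_type:
  assumes "G \<in> em_graphs Rs A \<Phi> Ord V" "\<forall>d\<in>Domain G. (d, b d) \<in> G"
  shows "has_em_type Rs A \<Phi> Ord (Domain G) b"
  using assms unfolding em_graphs_def has_em_type_def incr_seq_def by auto

lemma graph_in_em_graphs:
  assumes "has_em_type Rs A \<Phi> Ord S b" "ofilter V S"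
  shows "{(d, b d) | d. d \<in> S} \<in> em_graphs Rs A \<Phi> Ord V"
proof -
  have "Domain {(d, b d) | d. d \<in> S} = S" by auto
  moreover have "tp Rs ({..<n} \<times> UNIV) (\<lambda>(k, i). t k i) A = \<Phi> n"
    if "incr_seq Ord S n s" "\<forall>k<n. (s k, t k) \<in> {(d, b d) | d. d \<in> S}" for n s t
  proof -
    have "tp Rs ({..<n} \<times> UNIV) (\<lambda>(k, i). t k i) A = tp Rs ({..<n} \<times> UNIV) (\<lambda>(k, i). b (s k) i) A"
      by (rule tp_cong) (use that(2) in auto)
    then show ?thesis using assms(1) that(1) unfolding has_em_type_def by simp
  qed
  ultimately show ?thesis
    using assms(2) unfolding em_graphs_def by (auto simp: single_valued_def)
qed

lemma em_graphs_chain_Union: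
  assumes C: "C \<in> chains (em_graphs Rs A \<Phi> Ord V)" "C \<noteq> {}"
  shows "\<Union>C \<in> em_graphs Rs A \<Phi> Ord V"
proof -
  have CP: "single_valued G" "ofilter V (Domain G)"
    "\<And>n s t. incr_seq Ord (Domain G) n s \<Longrightarrow> \<forall>k<n. (s k, t k) \<in> G \<Longrightarrow>
       tp Rs ({..<n} \<times> UNIV) (\<lambda>(k, i). t k i) A = \<Phi> n"
    if "G \<in> C" for G
    using chainsD2[OF C(1)] that unfolding em_graphs_def by blast+
  have "single_valued (\<Union>C)"
  proof (rule single_valuedI)
    fix d y y'
    assume "(d, y) \<in> \<Union>C" "(d, y') \<in> \<Union>C"
    then obtain G1 G2 where "G1 \<in> C" "G2 \<in> C" "(d, y) \<in> G1" "(d, y') \<in> G2"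
      by blast
    then obtain G where "G \<in> C" "(d, y) \<in> G" "(d, y') \<in> G"
      using chainsD[OF C(1), of G1 G2] by blast
    then show "y = y'" using CP(1) single_valuedD by metis
  qed
  moreover have "ofilter V (Domain (\<Union>C))"
    using CP(2) unfolding ofilter_def by blast
  moreover have "tp Rs ({..<n} \<times> UNIV) (\<lambda>(k, i). t k i) A = \<Phi> n"
    if s: "incr_seq Ord (Domain (\<Union>C)) n s" and st: "\<forall>k<n. (s k, t k) \<in> \<Union>C" for n s t
  proof -
    have "(\<lambda>k. (s k, t k)) ` {..<n} \<subseteq> \<Union>C" using st by auto
    moreover have "subset.chain (em_graphs Rs A \<Phi> Ord V) C"
      using C(1) by (simp add: chains_alt_def)
    ultimately obtain G where G: "G \<in> C" "(\<lambda>k. (s k, t k)) ` {..<n} \<subseteq> G"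
      by (rule finite_subset_Union_chain[OF finite_imageI[OF finite_lessThan] _ C(2)])
    then have "\<forall>k<n. (s k, t k) \<in> G" by blast
    moreover from this have "incr_seq Ord (Domain G) n s"
      using s unfolding incr_seq_def by auto
    ultimately show ?thesis
      by (rule CP(3)[OF G(1), rotated])
  qed
  ultimately show ?thesis unfolding em_graphs_def by blast
qed

text \<open>Homogeneity over \<open>A\<close> moves the realization \<open>c\<close> on \<open>U\<close> onto the one given by \<open>M\<close>.\<close>

lemma em_graphs_extend:
  fixes c :: "'x \<Rightarrow> 'i \<Rightarrow> 'm"
  assumes hom: "strongly_hom Sig Rs Lam"
    and Lam: "infinite Lam" "A <o Lam" "(UNIV :: 'i set) <o Lam"
    and Ord: "linear_order_on UNIV Ord"
    and M: "M \<in> em_graphs Rs A \<Phi> Ord V" "Domain M <o Lam"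
    and c: "has_em_type Rs A \<Phi> Ord U c" "Domain M \<subseteq> U" "ofilter V U"
  shows "\<exists>M' \<in> em_graphs Rs A \<Phi> Ord V. M \<subseteq> M' \<and> Domain M' = U"
proof -
  define b where "b d = (SOME y. (d, y) \<in> M)" for d
  have b: "(d, b d) \<in> M" if "d \<in> Domain M" for d
    using Domain_some_mem[OF that] unfolding b_def .
  have tp_eq: "tp Rs (Domain M \<times> UNIV) (\<lambda>(d, i). c d i) A
      = tp Rs (Domain M \<times> UNIV) (\<lambda>(d, i). b d i) A"
    using has_em_type_tp_eq[OF Ord has_em_type_mono[OF c(1,2)] em_graphs_has_em_type[OF M(1)]] b
    by blast
  obtain g where g: "aut Sig Rs g" "\<forall>x\<in>A. g x = x" "\<forall>d\<in>Domain M. g \<circ> c d = b d"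
    using strongly_hom_fixing_family[OF hom Lam(1) M(2) Lam(3,2) tp_eq] by blast
  define M' where "M' = {(d, g \<circ> c d) | d. d \<in> U}"
  have "M' \<in> em_graphs Rs A \<Phi> Ord V"
    unfolding M'_def by (rule graph_in_em_graphs[OF has_em_type_aut[OF c(1) g(1,2)] c(3)])
  moreover have "M \<subseteq> M'"
  proof
    fix z
    assume z: "z \<in> M"
    then obtain d y where "z = (d, y)" "d \<in> Domain M" by (cases z) auto
    moreover then have "y = b d"
      using z b M(1) unfolding em_graphs_def by (auto dest: single_valuedD)
    ultimately show "z \<in> M'" using g(3) c(2) unfolding M'_def by auto
  qed
  moreover have "Domain M' = U" unfolding M'_def by auto
  ultimately show ?thesis by blast
qed

lemma em_graphs_maximal_Domain:
  fixes Ord :: "('x \<times> 'x) set" and M :: "('x \<times> ('i \<Rightarrow> 'm)) set"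
  assumes hom: "strongly_hom Sig Rs Lam"
    and Lam: "infinite Lam" "A <o Lam" "(UNIV :: 'i set) <o Lam"
    and Ord: "linear_order_on UNIV Ord" and D: "infinite D" "D <=o Lam"
    and smaller: "\<And>U. U <o D \<Longrightarrow> \<exists>c :: 'x \<Rightarrow> 'i \<Rightarrow> 'm. has_em_type Rs A \<Phi> Ord U c"
    and M: "M \<in> em_graphs Rs A \<Phi> Ord (card_of D)"
      "\<forall>X\<in>em_graphs Rs A \<Phi> Ord (card_of D). M \<subseteq> X \<longrightarrow> X = M"
  shows "Domain M = D"
proof (rule ccontr)
  let ?V = "card_of D"
  have wo: "wo_rel ?V" by (simp add: wo_rel_def card_of_Well_order)
  assume "Domain M \<noteq> D"
  moreover have "ofilter ?V (Domain M)" using M(1) by (simp add: em_graphs_def)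
  ultimately obtain w where w: "w \<in> D" "Domain M = underS ?V w"
    using wo_rel.ofilter_underS_Field[OF wo] by (auto simp: Field_card_of)
  have small: "Domain M <o D"
    using card_of_underS[OF card_of_Card_order, of w D] w by (simp add: Field_card_of)
  have U: "under ?V w = Domain M \<union> {w}"
    using w Refl_under_underS[of ?V w] wo_rel.REFL[OF wo] by (simp add: Field_card_of)
  have "under ?V w <o D"
    unfolding U by (rule card_of_Un_ordLess_infinite[OF D(1) small finite_ordLess_infinite_set])
      (use D in auto)
  then obtain c :: "'x \<Rightarrow> 'i \<Rightarrow> 'm" where c: "has_em_type Rs A \<Phi> Ord (under ?V w) c"
    using smaller by blast
  obtain M' where "M' \<in> em_graphs Rs A \<Phi> Ord ?V" "M \<subseteq> M'" "Domain M' = under ?V w"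
    using em_graphs_extend[OF hom Lam Ord M(1) ordLess_ordLeq_trans[OF small D(2)] c _
        wo_rel.under_ofilter[OF wo]] U by blast
  then have "w \<in> Domain M" using M(2) U by blast
  then show False using w(2) underS_notIn[of w ?V] by simp
qed

lemma has_em_type_stretch:
  fixes f :: "'j \<Rightarrow> 'i \<Rightarrow> 'm" and Ord :: "('x \<times> 'x) set"
  assumes hom: "strongly_hom Sig Rs Lam"
    and Lam: "infinite Lam" "A <o Lam" "(UNIV :: 'i set) <o Lam"
    and Ord: "linear_order_on UNIV Ord"
    and J: "linear_order_on J r" "infinite J" and f: "has_em_type Rs A \<Phi> r J f"
  shows "D <=o Lam \<Longrightarrow> \<exists>b :: 'x \<Rightarrow> 'i \<Rightarrow> 'm. has_em_type Rs A \<Phi> Ord D b"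
proof (induction D rule: wf_induct[OF wf_inv_image[OF wf_ordLess, of card_of]])
  case (1 D)
  show ?case
  proof (cases "finite D")
    case True
    then show ?thesis using has_em_type_finite[OF Ord _ J f] by blast
  next
    case False
    let ?P = "em_graphs Rs A \<Phi> Ord (card_of D) :: ('x \<times> ('i \<Rightarrow> 'm)) set set"
    obtain b0 :: "'x \<Rightarrow> 'i \<Rightarrow> 'm" where "has_em_type Rs A \<Phi> Ord {} b0"
      using has_em_type_finite[OF Ord _ J f] by blast
    then have seed: "{(d, b0 d) | d. d \<in> {}} \<in> ?P"
      by (rule graph_in_em_graphs) (simp add: ofilter_def)
    have "\<exists>U\<in>?P. \<forall>X\<in>C. X \<subseteq> U" if "C \<in> chains ?P" for C
    proof (cases "C = {}")
      case False
      then show ?thesis using em_graphs_chain_Union[OF that False] by blast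
    qed (use seed in blast)
    then obtain M where M: "M \<in> ?P" "\<forall>X\<in>?P. M \<subseteq> X \<longrightarrow> X = M"
      using Zorn_Lemma2[of ?P] by auto
    have "\<exists>c :: 'x \<Rightarrow> 'i \<Rightarrow> 'm. has_em_type Rs A \<Phi> Ord U c" if "U <o D" for U
      using "1.IH" that ordLess_ordLeq_trans[OF that "1.prems", THEN ordLess_imp_ordLeq] by auto
    then have "Domain M = D"
      by (rule em_graphs_maximal_Domain[OF hom Lam Ord False "1.prems" _ M])
    moreover have "has_em_type Rs A \<Phi> Ord (Domain M) (\<lambda>d. SOME y. (d, y) \<in> M)"
      by (rule em_graphs_has_em_type[OF M(1)]) (simp add: Domain_some_mem)
    ultimately show ?thesis by auto
  qed
qed

section \<open>Chains of indiscernible sequences stay inside SE(A)\<close>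

lemma SE_equiv: "E \<in> SE Sig Rs Lam A \<Longrightarrow> equiv UNIV E"
  unfolding SE_def by blast

lemma SE_aut_iff:
  "E \<in> SE Sig Rs Lam A \<Longrightarrow> aut Sig Rs g \<Longrightarrow> \<forall>x\<in>A. g x = x \<Longrightarrow> (x, y) \<in> E \<longleftrightarrow> (g \<circ> x, g \<circ> y) \<in> E"
  unfolding SE_def by blast

lemma SE_few_classes: "E \<in> SE Sig Rs Lam A \<Longrightarrow> UNIV // E <o Lam"
  unfolding SE_def by blast

lemma SE_pairwise_inequivalent_small:
  assumes "E \<in> SE Sig Rs Lam A" "\<And>u v. u \<in> D \<Longrightarrow> v \<in> D \<Longrightarrow> u \<noteq> v \<Longrightarrow> (b u, b v) \<notin> E"
  shows "D <o Lam"
proof -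
  have E: "equiv UNIV E" "UNIV // E <o Lam"
    using SE_equiv[OF assms(1)] SE_few_classes[OF assms(1)] .
  have "inj_on (\<lambda>u. E `` {b u}) D"
    using assms(2) eq_equiv_class_iff[OF E(1)] by (auto simp: inj_on_def)
  moreover have "(\<lambda>u. E `` {b u}) ` D \<subseteq> UNIV // E" by (auto intro: quotientI)
  ultimately have "D <=o UNIV // E" using card_of_ordLeq by blast
  then show ?thesis using E(2) by (rule ordLeq_ordLess_trans)
qed

lemma has_em_type_pair_aut:
  fixes f :: "'j \<Rightarrow> 'i \<Rightarrow> 'm" and b :: "'x \<Rightarrow> 'i \<Rightarrow> 'm"
  assumes hom: "strongly_hom Sig Rs Lam"
    and Lam: "infinite Lam" "A <o Lam" "(UNIV :: 'i set) <o Lam"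
    and f: "has_em_type Rs A \<Phi> r J f" "x \<in> J" "y \<in> J" "(x, y) \<in> r" "x \<noteq> y"
    and b: "has_em_type Rs A \<Phi> Ord D b" "u \<in> D" "v \<in> D" "(u, v) \<in> Ord" "u \<noteq> v"
  shows "\<exists>g. aut Sig Rs g \<and> (\<forall>x\<in>A. g x = x) \<and> g \<circ> f x = b u \<and> g \<circ> f y = b v"
proof -
  define t where "t k = (if k = 0 then x else y)" for k :: nat
  define s where "s k = (if k = 0 then u else v)" for k :: nat
  have "incr_seq r J 2 t" "incr_seq Ord D 2 s"
    using f b unfolding incr_seq_def t_def s_def by auto
  then have tp2: "tp Rs ({..<2} \<times> UNIV) (\<lambda>(k, i). f (t k) i) A
      = tp Rs ({..<2} \<times> UNIV) (\<lambda>(k, i). b (s k) i) A"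
    using f(1) b(1) unfolding has_em_type_def by simp
  obtain g where g: "aut Sig Rs g" "\<forall>x\<in>A. g x = x" "\<forall>k\<in>{..<2}. g \<circ> f (t k) = b (s k)"
    using strongly_hom_fixing_family[OF hom Lam(1)
        finite_ordLess_infinite_set[OF finite_lessThan Lam(1)] Lam(3,2) tp2] by blast
  moreover have "g \<circ> f x = b u" "g \<circ> f y = b v"
    using g(3)[rule_format, of 0] g(3)[rule_format, of 1] by (simp_all add: t_def s_def)
  ultimately show ?thesis by blast
qed

lemma indisc_pair_in_SE:
  fixes f :: "'j \<Rightarrow> 'i \<Rightarrow> 'm"
  assumes hom: "strongly_hom Sig Rs Lam"
    and Lam: "infinite Lam" "A <o Lam" "(UNIV :: 'i set) <o Lam"
    and J: "linear_order_on J r" "infinite J" "indisc Rs UNIV A r J f"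
    and E: "E \<in> SE Sig Rs Lam A"
    and xy: "x \<in> J" "y \<in> J" "(x, y) \<in> r" "x \<noteq> y"
  shows "(f x, f y) \<in> E"
proof (rule ccontr)
  assume nE: "(f x, f y) \<notin> E"
  obtain \<Phi> where \<Phi>: "has_em_type Rs A \<Phi> r J f" using J(3) indisc_iff_has_em_type by blast
  obtain Ord :: "('m \<times> 'm) set" where Ord: "linear_order_on UNIV Ord"
    using well_order_on unfolding well_order_on_def by blast
  obtain b :: "'m \<Rightarrow> 'i \<Rightarrow> 'm" where b: "has_em_type Rs A \<Phi> Ord Lam b"
    using has_em_type_stretch[OF hom Lam Ord J(1,2) \<Phi> ordLeq_refl[OF card_of_Card_order]] by blast
  have sep: "(b u, b v) \<notin> E" if uv: "u \<in> Lam" "v \<in> Lam" "(u, v) \<in> Ord" "u \<noteq> v" for u v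
  proof -
    obtain g where g: "aut Sig Rs g" "\<forall>x\<in>A. g x = x" "g \<circ> f x = b u" "g \<circ> f y = b v"
      using has_em_type_pair_aut[OF hom Lam \<Phi> xy b uv] by blast
    then show ?thesis using SE_aut_iff[OF E g(1,2), of "f x" "f y"] nE by simp
  qed
  have "(b u, b v) \<notin> E" if "u \<in> Lam" "v \<in> Lam" "u \<noteq> v" for u v
  proof -
    have "(u, v) \<in> Ord \<or> (v, u) \<in> Ord"
      using Ord that unfolding linear_order_on_def total_on_def by blast
    then show ?thesis
    proof
      assume "(v, u) \<in> Ord"
      then have "(b v, b u) \<notin> E" using sep that by blast
      then show ?thesis using SE_equiv[OF E] unfolding equiv_def sym_def by blast
    qed (use sep that in blast)
  qed
  then have "Lam <o Lam" by (rule SE_pairwise_inequivalent_small[OF E])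
  then show False by (simp add: ordLess_irreflexive)
qed

lemma indisc_in_SE:
  fixes f :: "'j \<Rightarrow> 'i \<Rightarrow> 'm"
  assumes hom: "strongly_hom Sig Rs Lam"
    and Lam: "infinite Lam" "A <o Lam" "(UNIV :: 'i set) <o Lam"
    and J: "linear_order_on J r" "infinite J" "indisc Rs UNIV A r J f"
    and E: "E \<in> SE Sig Rs Lam A" and xy: "x \<in> J" "y \<in> J"
  shows "(f x, f y) \<in> E"
proof -
  have E_equiv: "refl E" "sym E" using SE_equiv[OF E] unfolding equiv_def by blast+
  consider "x = y" | "(x, y) \<in> r" "x \<noteq> y" | "(y, x) \<in> r" "x \<noteq> y"
    using J(1) xy unfolding linear_order_on_def total_on_def by blast
  then show ?thesis
  proof cases
    case 1
    then show ?thesis using E_equiv(1) by (simp add: refl_on_def)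
  next
    case 2
    then show ?thesis by (rule indisc_pair_in_SE[OF hom Lam J E xy])
  next
    case 3
    then have "(f y, f x) \<in> E" using indisc_pair_in_SE[OF hom Lam J E xy(2,1)] by blast
    then show ?thesis using E_equiv(2) by (simp add: symD)
  qed
qed

definition indisc_linked :: "'m list set set \<Rightarrow> 'm set \<Rightarrow> ('i \<Rightarrow> 'm) \<Rightarrow> ('i \<Rightarrow> 'm) \<Rightarrow> bool" where
  "indisc_linked Rs A u v \<longleftrightarrow> (\<exists>(r :: (nat \<times> nat) set) (J :: nat set) (f :: nat \<Rightarrow> 'i \<Rightarrow> 'm).
     linear_order_on J r \<and> infinite J \<and> indisc Rs UNIV A r J f \<and> (\<exists>x\<in>J. f x = u) \<and> (\<exists>y\<in>J. f y = v))"

lemma indisc_linkedI: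
  fixes f :: "nat \<Rightarrow> 'i \<Rightarrow> 'm"
  assumes "linear_order_on J r" "infinite J" "indisc Rs UNIV A r J f" "x \<in> J" "y \<in> J"
  shows "indisc_linked Rs A (f x) (f y)"
  using assms unfolding indisc_linked_def by blast

lemma indisc_linkedE:
  assumes "indisc_linked Rs A u v"
  obtains r J and f :: "nat \<Rightarrow> 'i \<Rightarrow> 'm" and x y where "linear_order_on J r" "infinite J"
    "indisc Rs UNIV A r J f" "x \<in> J" "y \<in> J" "f x = u" "f y = v"
  using assms unfolding indisc_linked_def by blast

lemma symp_indisc_linked: "symp (indisc_linked Rs A)"
  unfolding symp_def indisc_linked_def by blast

lemma indisc_linked_aut:
  fixes u v :: "'i \<Rightarrow> 'm"
  assumes "indisc_linked Rs A u v" "aut Sig Rs g" "\<forall>x\<in>A. g x = x"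
  shows "indisc_linked Rs A (g \<circ> u) (g \<circ> v)"
proof -
  obtain r J and f :: "nat \<Rightarrow> 'i \<Rightarrow> 'm" and x y where "linear_order_on J r" "infinite J"
    "indisc Rs UNIV A r J f" "x \<in> J" "y \<in> J" "f x = u" "f y = v"
    using assms(1) by (rule indisc_linkedE)
  then show ?thesis
    using indisc_linkedI[OF _ _ indisc_aut[OF _ assms(2,3)], of J r f x y] by simp
qed

lemma indisc_conn_aut:
  fixes u v :: "'i \<Rightarrow> 'm"
  assumes "(indisc_linked Rs A)\<^sup>*\<^sup>* u v" "aut Sig Rs g" "\<forall>x\<in>A. g x = x"
  shows "(indisc_linked Rs A)\<^sup>*\<^sup>* (g \<circ> u) (g \<circ> v)"
  using assms(1)
proof (induction rule: rtranclp_induct)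
  case (step y z)
  have "indisc_linked Rs A (g \<circ> y) (g \<circ> z)"
    by (rule indisc_linked_aut[OF step(2) assms(2,3)])
  with step.IH show ?case by (rule rtranclp.rtrancl_into_rtrancl[of "indisc_linked Rs A"])
qed simp

lemma indisc_conn_tp_eq:
  fixes u v :: "'i \<Rightarrow> 'm"
  assumes "(indisc_linked Rs A)\<^sup>*\<^sup>* u v"
  shows "tp Rs UNIV u A = tp Rs UNIV v A"
  using assms
proof (induction rule: rtranclp_induct)
  case (step y z)
  obtain r J and f :: "nat \<Rightarrow> 'i \<Rightarrow> 'm" and j k where "linear_order_on J r" "infinite J"
    "indisc Rs UNIV A r J f" "j \<in> J" "k \<in> J" "f j = y" "f k = z"
    using step(2) by (rule indisc_linkedE)
  then have "tp Rs UNIV y A = tp Rs UNIV z A" using indisc_tp_eq[of Rs UNIV A r J f j k] by simp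
  with step.IH show ?case by simp
qed simp

lemma indisc_conn_in_SE:
  fixes u v :: "'i \<Rightarrow> 'm"
  assumes hom: "strongly_hom Sig Rs Lam"
    and Lam: "infinite Lam" "A <o Lam" "(UNIV :: 'i set) <o Lam"
    and E: "E \<in> SE Sig Rs Lam A" and "(indisc_linked Rs A)\<^sup>*\<^sup>* u v"
  shows "(u, v) \<in> E"
  using assms(6)
proof (induction rule: rtranclp_induct)
  case base
  then show ?case using SE_equiv[OF E] by (simp add: equiv_def refl_on_def)
next
  case (step y z)
  obtain r J and f :: "nat \<Rightarrow> 'i \<Rightarrow> 'm" and j k where J: "linear_order_on J r" "infinite J"
    "indisc Rs UNIV A r J f" "j \<in> J" "k \<in> J" and jk: "f j = y" "f k = z"
    using step(2) by (rule indisc_linkedE)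
  have "(f j, f k) \<in> E" by (rule indisc_in_SE[OF hom Lam J(1-3) E J(4,5)])
  moreover have "trans E" using SE_equiv[OF E] by (simp add: equiv_def)
  ultimately show ?case using step.IH jk by (metis transD)
qed

section \<open>Condition (P) bounds the number of chain classes\<close>

lemma cond_P_cardinals:
  assumes "cond_P Rs Lam Pi Pi'"
  shows "infinite Pi'" "Pi <=o Pi'" "Pi' <=o Lam"
  using assms unfolding cond_P_def by blast+

lemma cond_P_ordLess_Lam:
  assumes "cond_P Rs Lam Pi Pi'" "X <o Pi"
  shows "X <o Lam"
  using ordLess_ordLeq_trans[OF assms(2) ordLeq_transitive[OF cond_P_cardinals(2,3)[OF assms(1)]]] .

lemma cond_PD:
  fixes I A :: "'m set" and X :: "'m \<Rightarrow> 'm \<Rightarrow> 'm" and r :: "('m \<times> 'm) set"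
  assumes "cond_P Rs Lam Pi Pi'" "I <o Pi" "A <o Pi" "Well_order r" "Pi' <=o Field r"
    and "\<forall>j\<in>Field r. tp Rs I (X j) A = tp Rs I c A"
  shows "\<exists>b. indisc Rs I A {(m, n). m \<le> n} UNIV b \<and>
     (\<forall>n. \<exists>s. incr_seq r (Field r) (Suc n) s \<and>
        tp Rs ({..<Suc n} \<times> I) (\<lambda>(k, i). X (s k) i) A = tp Rs ({..<Suc n} \<times> I) (\<lambda>(k, i). b k i) A)"
  using assms unfolding cond_P_def by blast

text \<open>\<open>cond_P\<close> speaks about tuples indexed by subsets of \<open>M\<close>; an injection of the index
  type into \<open>M\<close> transfers it to tuples of type \<open>'i \<Rightarrow> 'm\<close>.\<close>

lemma cond_P_tuples:
  fixes X :: "'m \<Rightarrow> 'i \<Rightarrow> 'm" and c :: "'i \<Rightarrow> 'm" and r :: "('m \<times> 'm) set"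
  assumes cP: "cond_P Rs Lam Pi Pi'" and small: "A <o Pi" "(UNIV :: 'i set) <o Pi"
    and r: "Well_order r" "Pi' <=o Field r"
    and X: "\<forall>j\<in>Field r. tp Rs UNIV (X j) A = tp Rs UNIV c A"
  shows "\<exists>b :: nat \<Rightarrow> 'i \<Rightarrow> 'm. indisc Rs UNIV A {(m, n). m \<le> n} UNIV b \<and>
     (\<forall>n. \<exists>s. incr_seq r (Field r) (Suc n) s \<and>
        tp Rs ({..<Suc n} \<times> UNIV) (\<lambda>(k, i). X (s k) i) A
            = tp Rs ({..<Suc n} \<times> UNIV) (\<lambda>(k, i). b k i) A)"
proof -
  have "Pi <=o (UNIV :: 'm set)" by (rule card_of_mono1) simp
  with small(2) have "(UNIV :: 'i set) <=o (UNIV :: 'm set)"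
    by (rule ordLess_ordLeq_trans[THEN ordLess_imp_ordLeq])
  then obtain e :: "'i \<Rightarrow> 'm" where e: "inj e"
    unfolding card_of_ordLeq[symmetric] by auto
  have I: "range e <o Pi" by (rule ordLeq_ordLess_trans[OF card_of_image small(2)])
  define X' where "X' j = X j \<circ> inv e" for j
  define c' where "c' = c \<circ> inv e"
  have "tp Rs (range e) (X' j) A = tp Rs (range e) c' A" if "j \<in> Field r" for j
  proof -
    have "X' j \<circ> e = X j" "c' \<circ> e = c" using e by (auto simp: X'_def c'_def fun_eq_iff)
    then show ?thesis using X that by (simp add: tp_image_eq_iff[OF e])
  qed
  then obtain b' where b': "indisc Rs (range e) A {(m, n). m \<le> n} UNIV b'"
    "\<forall>n. \<exists>s. incr_seq r (Field r) (Suc n) s \<and>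
        tp Rs ({..<Suc n} \<times> range e) (\<lambda>(k, i). X' (s k) i) A
            = tp Rs ({..<Suc n} \<times> range e) (\<lambda>(k, i). b' k i) A"
    using cond_PD[OF cP I small(1) r] by blast
  define b where "b k = b' k \<circ> e" for k
  have "indisc Rs UNIV A {(m, n). m \<le> n} UNIV b"
    unfolding b_def by (rule indisc_comp_inj[OF e b'(1)])
  moreover have "\<exists>s. incr_seq r (Field r) (Suc n) s \<and>
        tp Rs ({..<Suc n} \<times> UNIV) (\<lambda>(k, i). X (s k) i) A
            = tp Rs ({..<Suc n} \<times> UNIV) (\<lambda>(k, i). b k i) A" for n
  proof -
    obtain s where s: "incr_seq r (Field r) (Suc n) s"
      "tp Rs ({..<Suc n} \<times> range e) (\<lambda>(k, i). X' (s k) i) A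
          = tp Rs ({..<Suc n} \<times> range e) (\<lambda>(k, i). b' k i) A"
      using b'(2) by blast
    have "X' j (e i) = X j i" for j i using e by (simp add: X'_def)
    then show ?thesis using s unfolding tp_seq_reindex[OF e] b_def by auto
  qed
  ultimately show ?thesis by blast
qed

lemma cond_P_linked_pair:
  fixes X :: "'m \<Rightarrow> 'i \<Rightarrow> 'm"
  assumes hom: "strongly_hom Sig Rs Lam" and Lam: "infinite Lam" and cP: "cond_P Rs Lam Pi Pi'"
    and small: "A <o Pi" "(UNIV :: 'i set) <o Pi"
    and X: "\<forall>j\<in>Pi'. tp Rs UNIV (X j) A = tp Rs UNIV c A"
  shows "\<exists>j1\<in>Pi'. \<exists>j2\<in>Pi'. j1 \<noteq> j2 \<and> indisc_linked Rs A (X j1) (X j2)"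
proof -
  obtain r :: "('m \<times> 'm) set" where "well_order_on Pi' r" using well_order_on by blast
  then have r: "Well_order r" "Field r = Pi'" using well_order_on_Well_order by blast+
  then have "Pi' <=o Field r" by (simp add: ordLeq_refl card_of_Card_order)
  then obtain b :: "nat \<Rightarrow> 'i \<Rightarrow> 'm" where b: "indisc Rs UNIV A {(m, n). m \<le> n} UNIV b"
    and bs: "\<forall>n. \<exists>s. incr_seq r (Field r) (Suc n) s \<and>
      tp Rs ({..<Suc n} \<times> UNIV) (\<lambda>(k, i). X (s k) i) A
          = tp Rs ({..<Suc n} \<times> UNIV) (\<lambda>(k, i). b k i) A"
    using cond_P_tuples[OF cP small r(1)] X r(2) by blast
  obtain s where s: "incr_seq r Pi' (Suc 1) s"
    and eq: "tp Rs ({..<Suc 1} \<times> UNIV) (\<lambda>(k, i). b k i) A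
        = tp Rs ({..<Suc 1} \<times> UNIV) (\<lambda>(k, i). X (s k) i) A"
    using bs[rule_format, of 1] r(2) by auto
  obtain g where g: "aut Sig Rs g" "\<forall>x\<in>A. g x = x" "\<forall>k\<in>{..<Suc 1}. g \<circ> b k = X (s k)"
    using strongly_hom_fixing_family[OF hom Lam finite_ordLess_infinite_set[OF finite_lessThan Lam]
        cond_P_ordLess_Lam[OF cP small(2)] cond_P_ordLess_Lam[OF cP small(1)] eq]
    by blast
  have "indisc_linked Rs A (g \<circ> b 0) (g \<circ> b 1)"
    by (rule indisc_linkedI[OF linear_order_on_nat_le infinite_UNIV_nat indisc_aut[OF b g(1,2)]])
      simp_all
  moreover have "s 0 \<in> Pi'" "s 1 \<in> Pi'" "s 0 \<noteq> s 1" using s unfolding incr_seq_def by auto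
  ultimately show ?thesis using g(3) by force
qed

definition indisc_chain_equiv :: "'m list set set \<Rightarrow> 'm set \<Rightarrow> ('m list set \<times> ('i + 'm) list) set
    \<Rightarrow> (('i \<Rightarrow> 'm) \<times> ('i \<Rightarrow> 'm)) set" where
  "indisc_chain_equiv Rs A p =
     {(x, y). if tp Rs UNIV x A = p then (indisc_linked Rs A)\<^sup>*\<^sup>* x y else tp Rs UNIV y A \<noteq> p}"

lemma equiv_indisc_chain_equiv: "equiv UNIV (indisc_chain_equiv Rs A p)"
proof -
  have conn: "equivp (indisc_linked Rs A)\<^sup>*\<^sup>*"
    by (rule equivp_rtranclp[OF symp_indisc_linked])
  let ?E = "indisc_chain_equiv Rs A p"
  have "refl ?E" by (rule refl_onI) (simp_all add: indisc_chain_equiv_def)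
  moreover have "sym ?E"
  proof (rule symI)
    fix x y
    assume "(x, y) \<in> ?E"
    then show "(y, x) \<in> ?E"
      using indisc_conn_tp_eq[of Rs A x y] equivp_symp[OF conn, of x y]
      unfolding indisc_chain_equiv_def by (auto split: if_splits)
  qed
  moreover have "trans ?E"
  proof (rule transI)
    fix x y z
    assume "(x, y) \<in> ?E" "(y, z) \<in> ?E"
    then show "(x, z) \<in> ?E"
      using indisc_conn_tp_eq[of Rs A x y] equivp_transp[OF conn, of x y z]
      unfolding indisc_chain_equiv_def by (auto split: if_splits)
  qed
  ultimately show ?thesis by (simp add: equiv_def)
qed

lemma indisc_chain_equiv_aut_iff:
  assumes g: "aut Sig Rs g" "\<forall>x\<in>A. g x = x"
  shows "(x, y) \<in> indisc_chain_equiv Rs A p \<longleftrightarrow> (g \<circ> x, g \<circ> y) \<in> indisc_chain_equiv Rs A p"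
proof -
  have "bij g" using g(1) by (simp add: aut_def autM_def)
  have "\<forall>x\<in>A. inv g x = x"
    using g(2) inv_f_f[OF bij_is_inj[OF \<open>bij g\<close>]] by metis
  then have "(indisc_linked Rs A)\<^sup>*\<^sup>* (g \<circ> x) (g \<circ> y) \<Longrightarrow> (indisc_linked Rs A)\<^sup>*\<^sup>* x y"
    using indisc_conn_aut[OF _ aut_inv[OF g(1)]] \<open>bij g\<close>
    by (metis bij_is_inj inv_o_cancel o_assoc id_comp)
  then show ?thesis
    unfolding indisc_chain_equiv_def using tp_aut[OF g] indisc_conn_aut[OF _ g] by auto
qed

lemma indisc_chain_equiv_few_classes:
  fixes c :: "'i \<Rightarrow> 'm"
  assumes hom: "strongly_hom Sig Rs Lam" and Lam: "infinite Lam" and cP: "cond_P Rs Lam Pi Pi'"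
    and small: "A <o Pi" "(UNIV :: 'i set) <o Pi"
  shows "UNIV // indisc_chain_equiv Rs A (tp Rs UNIV c A) <o Lam"
proof (rule ccontr)
  let ?p = "tp Rs UNIV c A"
  let ?E = "indisc_chain_equiv Rs A ?p"
  let ?cls = "\<lambda>x. ?E `` {x}"
  assume "\<not> UNIV // ?E <o Lam"
  then have "Lam <=o UNIV // ?E"
    using ordLess_or_ordLeq[OF card_of_Well_order card_of_Well_order] by blast
  with cond_P_cardinals(3)[OF cP] have "Pi' <=o UNIV // ?E"
    by (rule ordLeq_transitive)
  moreover have "UNIV // ?E \<subseteq> insert {y. tp Rs UNIV y A \<noteq> ?p} (?cls ` {x. tp Rs UNIV x A = ?p})"
    by (auto simp: quotient_def indisc_chain_equiv_def)
  ultimately have "Pi' <=o insert {y. tp Rs UNIV y A \<noteq> ?p} (?cls ` {x. tp Rs UNIV x A = ?p})"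
    by (rule ordLeq_transitive[OF _ card_of_mono1])
  then have "Pi' <=o ?cls ` {x. tp Rs UNIV x A = ?p}"
    by (rule ordLeq_insert_infinite[OF cond_P_cardinals(1)[OF cP]])
  then obtain X where "\<forall>j\<in>Pi'. X j \<in> {x. tp Rs UNIV x A = ?p}" and inj: "inj_on (?cls \<circ> X) Pi'"
    by (rule ordLeq_image_reps)
  then have X: "\<forall>j\<in>Pi'. tp Rs UNIV (X j) A = ?p" by simp
  obtain j1 j2 where j: "j1 \<in> Pi'" "j2 \<in> Pi'" "j1 \<noteq> j2" "indisc_linked Rs A (X j1) (X j2)"
    using cond_P_linked_pair[OF hom Lam cP small X] by blast
  then have "(X j1, X j2) \<in> ?E"
    using X j(1) unfolding indisc_chain_equiv_def by auto
  then have "?cls (X j1) = ?cls (X j2)"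
    using eq_equiv_class_iff[OF equiv_indisc_chain_equiv UNIV_I UNIV_I] by blast
  then have "j1 = j2" using inj_onD[OF inj _ j(1,2)] by simp
  with j(3) show False ..
qed

lemma indisc_chain_equiv_in_SE:
  fixes c :: "'i \<Rightarrow> 'm"
  assumes "strongly_hom Sig Rs Lam" "infinite Lam" "cond_P Rs Lam Pi Pi'"
    and "A <o Pi" "(UNIV :: 'i set) <o Pi"
  shows "indisc_chain_equiv Rs A (tp Rs UNIV c A) \<in> SE Sig Rs Lam A"
  unfolding SE_def
  using equiv_indisc_chain_equiv indisc_chain_equiv_aut_iff indisc_chain_equiv_few_classes[OF assms]
  by blast

theorem lemma3p4:
  fixes Sig Rs :: "'m list set set"
    and Lam Pi Pi' A :: "'m set"
    and a b :: "'i \<Rightarrow> 'm"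
  assumes "logical_structure Sig Rs"
    and "infinite (UNIV :: 'm set)"
    and "infinite Lam"
    and "strongly_hom Sig Rs Lam"
    and "cond_P Rs Lam Pi Pi'"
    and "(A) <o (Pi)"
    and "(UNIV :: 'i set) <o (Pi)"
    and "large Rs Lam UNIV a A"
    and "large Rs Lam UNIV b A"
  shows "(\<exists>n (c :: nat \<Rightarrow> 'i \<Rightarrow> 'm). c 0 = a \<and> c n = b \<and>
            (\<forall>i<n. \<exists>(r :: (nat \<times> nat) set) (J :: nat set) (f :: nat \<Rightarrow> 'i \<Rightarrow> 'm).
               linear_order_on J r \<and> infinite J \<and> indisc Rs UNIV A r J f \<and>
               (\<exists>x\<in>J. f x = c i) \<and> (\<exists>y\<in>J. f y = c (Suc i))))
         \<longleftrightarrow> lstp_eq Sig Rs Lam A a b"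
proof -
  have small: "A <o Lam" "(UNIV :: 'i set) <o Lam"
    using cond_P_ordLess_Lam[OF assms(5)] assms(6,7) by blast+
  show ?thesis
    unfolding indisc_linked_def[symmetric] relpowp_fun_conv[symmetric] rtranclp_power[symmetric]
  proof
    assume "(indisc_linked Rs A)\<^sup>*\<^sup>* a b"
    then show "lstp_eq Sig Rs Lam A a b"
      unfolding lstp_eq_def using indisc_conn_in_SE[OF assms(4,3) small] by blast
  next
    assume "lstp_eq Sig Rs Lam A a b"
    then have "(a, b) \<in> indisc_chain_equiv Rs A (tp Rs UNIV a A)"
      unfolding lstp_eq_def using indisc_chain_equiv_in_SE[OF assms(4,3,5-7)] by blast
    then show "(indisc_linked Rs A)\<^sup>*\<^sup>* a b" by (simp add: indisc_chain_equiv_def)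
  qed
qed

end
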